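(* (Extension Lemma.) Let $\Gamma$ be an abstract consistency class and $A\in\Gamma$. Then there exists an evident branch $E$ with $A\subseteq E$. Moreover, if $\Gamma$ is complete, there exists a complete evident branch $E$ with $A\subseteq E$.
   Context: Types: a countable set of base types including a distinguished $o$; other base types are sorts ($\alpha$). Types: base types and $\sigma\tau$ (functions from $\sigma$ to $\tau$; $\sigma\tau\mu=\sigma(\tau\mu)$). Countably many names, each with a unique type, infinitely many of each type. Terms: names; $st:\mu$ for $s:\tau\mu,t:\tau$; $\lambda x.t:\sigma\tau$ for a name $x:\sigma$, $t:\tau$. Logical constants: $\neg:oo$, $=_\sigma:\sigma\sigma o$; all other names are variables. Formulas: terms of type $o$; $s=_\sigma t$ is $(=_\sigma s)t$; $s\neq_\sigma t$ is $\neg(s=_\sigma t)$. A fixed type-preserving total normalization operator $[\cdot]$ on terms is given; $s$ is normal iff $[s]=s$; it satisfies $[[s]]=[s]$, $[[s]t]=[st]$, and $[xs_1\dots s_n]=x[s_1]\dots[s_n]$ for every name $x$ and $n\ge0$ with $xs_1\dots s_n$ of base type. A branch is a set of normal formulas. A branch $E$ is evident if ($x$ ranges over variables): (DN) $\neg\neg s\in E\Rightarrow s\in E$; (BQ) $s=_ot\in E\Rightarrow$ ($s,t\in E$ or $\neg s,\neg t\in E$); (BE) $s\neq_ot\in E\Rightarrow$ ($s,\neg t\in E$ or $\neg s,t\in E$); (FQ) $s=_{\sigma\tau}t\in E\Rightarrow[su]=[tu]\in E$ for every normal $u:\sigma$; (FE) $s\neq_{\sigma\tau}t\in E\Rightarrow[sx]\neq[tx]\in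 E$ for some variable $x$; (Mat) if $xs_1\dots s_n,\neg xt_1\dots t_n\in E$ then $n\ge1$ and $s_i\neq t_i\in E$ for some $i$; (Dec) if $xs_1\dots s_n\neq_\alpha xt_1\dots t_n\in E$ then $n\ge1$ and $s_i\neq t_i\in E$ for some $i$; (Con) if $s=_\alpha t,u\neq_\alpha v\in E$ then ($s\neq u,t\neq u\in E$) or ($s\neq v,t\neq v\in E$). $E$ is complete if for every normal formula $s$, $s\in E$ or $\neg s\in E$. An abstract consistency class is a set $\Gamma$ of branches such that every $A\in\Gamma$ satisfies: (DN) if $\neg\neg s\in A$ then $A\cup\{s\}\in\Gamma$; (BQ) if $s=_ot\in A$ then $A\cup\{s,t\}\in\Gamma$ or $A\cup\{\neg s,\neg t\}\in\Gamma$; (BE) if $s\neq_ot\in A$ then $A\cup\{s,\neg t\}\in\Gamma$ or $A\cup\{\neg s,t\}\in\Gamma$; (FQ) if $s=_{\sigma\tau}t\in A$ then $A\cup\{[su]=[tu]\}\in\Gamma$ for every normal $u:\sigma$; (FE) if $s\neq_{\sigma\tau}t\in A$ then $A\cup\{[sx]\neq[tx]\}\in\Gamma$ for some variable $x$; (Mat) if $xs_1\dots s_n\in A$ and $\neg xt_1\dots t_n\in A$ then $n\ge1$ and $A\cup\{s_i\neq t_i\}\in\Gamma$ for some $i$; (Dec) if $xs_1\dots s_n\neq_\alpha xt_1\dots t_n\in A$ then $n\ge1$ and $A\cup\{s_i\neq t_i\}\in\Gamma$ for some $i$; (Con) if $s=_\alpha t$ and $u\neq_\alpha v$ are in $A$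 then $A\cup\{s\neq u,t\neq u\}\in\Gamma$ or $A\cup\{s\neq v,t\neq v\}\in\Gamma$. $\Gamma$ is complete if for every $A\in\Gamma$ and every normal formula $s$, $A\cup\{s\}\in\Gamma$ or $A\cup\{\neg s\}\in\Gamma$. *)

theory Defs
  imports Main
begin

datatype ty = To | Sort nat | Fun ty ty

datatype name = Neg | Eq ty | V nat ty

fun nty :: "name \<Rightarrow> ty" where
  "nty Neg = Fun To To"
| "nty (Eq T) = Fun T (Fun T To)"
| "nty (V k T) = T"

datatype tm = N name | App tm tm | Lam name tm

fun tyof :: "tm \<Rightarrow> ty option" where
  "tyof (N x) = Some (nty x)"
| "tyof (App s t) =
     (case tyof s of Some (Fun A B) \<Rightarrow> (if tyof t = Some A then Some B else None) | _ \<Rightarrow> None)"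
| "tyof (Lam x t) = (case tyof t of Some B \<Rightarrow> Some (Fun (nty x) B) | None \<Rightarrow> None)"

definition wt :: "tm \<Rightarrow> bool" where
  "wt t \<longleftrightarrow> tyof t \<noteq> None"

fun is_base :: "ty \<Rightarrow> bool" where
  "is_base (Fun _ _) = False"
| "is_base _ = True"

fun is_var :: "name \<Rightarrow> bool" where
  "is_var (V _ _) = True"
| "is_var _ = False"

definition apps :: "tm \<Rightarrow> tm list \<Rightarrow> tm" where
  "apps h ss = foldl App h ss"

definition neg :: "tm \<Rightarrow> tm" where
  "neg s = App (N Neg) s"

definition eqt :: "ty \<Rightarrow> tm \<Rightarrow> tm \<Rightarrow> tm" where
  "eqt T s t = App (App (N (Eq T)) s) t"

definition neqt :: "ty \<Rightarrow> tm \<Rightarrow> tm \<Rightarrow> tm" where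
  "neqt T s t = neg (eqt T s t)"

definition normop :: "(tm \<Rightarrow> tm) \<Rightarrow> bool" where
  "normop nf \<longleftrightarrow>
     (\<forall>s T. tyof s = Some T \<longrightarrow> tyof (nf s) = Some T) \<and>
     (\<forall>s. wt s \<longrightarrow> nf (nf s) = nf s) \<and>
     (\<forall>s t. wt (App s t) \<longrightarrow> nf (App (nf s) t) = nf (App s t)) \<and>
     (\<forall>x ss T. tyof (apps (N x) ss) = Some T \<longrightarrow> is_base T \<longrightarrow>
         nf (apps (N x) ss) = apps (N x) (map nf ss))"

definition normal :: "(tm \<Rightarrow> tm) \<Rightarrow> tm \<Rightarrow> bool" where
  "normal nf s \<longleftrightarrow> nf s = s"

definition formula :: "tm \<Rightarrow> bool" where
  "formula s \<longleftrightarrow> tyof s = Some To"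

definition branch :: "(tm \<Rightarrow> tm) \<Rightarrow> tm set \<Rightarrow> bool" where
  "branch nf E \<longleftrightarrow> (\<forall>s\<in>E. formula s \<and> normal nf s)"

definition evident :: "(tm \<Rightarrow> tm) \<Rightarrow> tm set \<Rightarrow> bool" where
  "evident nf E \<longleftrightarrow>
     branch nf E \<and>
     \<comment> \<open>DN\<close>
     (\<forall>s. neg (neg s) \<in> E \<longrightarrow> s \<in> E) \<and>
     \<comment> \<open>BQ\<close>
     (\<forall>s t. eqt To s t \<in> E \<longrightarrow> (s \<in> E \<and> t \<in> E) \<or> (neg s \<in> E \<and> neg t \<in> E)) \<and>
     \<comment> \<open>BE\<close>
     (\<forall>s t. neqt To s t \<in> E \<longrightarrow> (s \<in> E \<and> neg t \<in> E) \<or> (neg s \<in> E \<and> t \<in> E)) \<and>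
     \<comment> \<open>FQ\<close>
     (\<forall>\<sigma> \<tau> s t. eqt (Fun \<sigma> \<tau>) s t \<in> E \<longrightarrow>
        (\<forall>u. tyof u = Some \<sigma> \<and> normal nf u \<longrightarrow> eqt \<tau> (nf (App s u)) (nf (App t u)) \<in> E)) \<and>
     \<comment> \<open>FE\<close>
     (\<forall>\<sigma> \<tau> s t. neqt (Fun \<sigma> \<tau>) s t \<in> E \<longrightarrow>
        (\<exists>k. neqt \<tau> (nf (App s (N (V k \<sigma>)))) (nf (App t (N (V k \<sigma>)))) \<in> E)) \<and>
     \<comment> \<open>Mat\<close>
     (\<forall>x ss ts. is_var x \<longrightarrow> length ss = length ts \<longrightarrow>
        apps (N x) ss \<in> E \<longrightarrow> neg (apps (N x) ts) \<in> E \<longrightarrow>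
        1 \<le> length ss \<and> (\<exists>i<length ss. \<exists>\<sigma>. neqt \<sigma> (ss ! i) (ts ! i) \<in> E)) \<and>
     \<comment> \<open>Dec\<close>
     (\<forall>k x ss ts. is_var x \<longrightarrow> length ss = length ts \<longrightarrow>
        neqt (Sort k) (apps (N x) ss) (apps (N x) ts) \<in> E \<longrightarrow>
        1 \<le> length ss \<and> (\<exists>i<length ss. \<exists>\<sigma>. neqt \<sigma> (ss ! i) (ts ! i) \<in> E)) \<and>
     \<comment> \<open>Con\<close>
     (\<forall>k s t u v. eqt (Sort k) s t \<in> E \<longrightarrow> neqt (Sort k) u v \<in> E \<longrightarrow>
        (neqt (Sort k) s u \<in> E \<and> neqt (Sort k) t u \<in> E) \<or>
        (neqt (Sort k) s v \<in> E \<and> neqt (Sort k) t v \<in> E))"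

definition complete_branch :: "(tm \<Rightarrow> tm) \<Rightarrow> tm set \<Rightarrow> bool" where
  "complete_branch nf E \<longleftrightarrow>
     (\<forall>s. formula s \<and> normal nf s \<longrightarrow> s \<in> E \<or> neg s \<in> E)"

definition acc :: "(tm \<Rightarrow> tm) \<Rightarrow> tm set set \<Rightarrow> bool" where
  "acc nf \<Gamma> \<longleftrightarrow>
     (\<forall>A\<in>\<Gamma>. branch nf A) \<and>
     (\<forall>A\<in>\<Gamma>.
       \<comment> \<open>DN\<close>
       (\<forall>s. neg (neg s) \<in> A \<longrightarrow> A \<union> {s} \<in> \<Gamma>) \<and>
       \<comment> \<open>BQ\<close>
       (\<forall>s t. eqt To s t \<in> A \<longrightarrow> A \<union> {s, t} \<in> \<Gamma> \<or> A \<union> {neg s, neg t} \<in> \<Gamma>) \<and>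
       \<comment> \<open>BE\<close>
       (\<forall>s t. neqt To s t \<in> A \<longrightarrow> A \<union> {s, neg t} \<in> \<Gamma> \<or> A \<union> {neg s, t} \<in> \<Gamma>) \<and>
       \<comment> \<open>FQ\<close>
       (\<forall>\<sigma> \<tau> s t. eqt (Fun \<sigma> \<tau>) s t \<in> A \<longrightarrow>
          (\<forall>u. tyof u = Some \<sigma> \<and> normal nf u \<longrightarrow>
             A \<union> {eqt \<tau> (nf (App s u)) (nf (App t u))} \<in> \<Gamma>)) \<and>
       \<comment> \<open>FE\<close>
       (\<forall>\<sigma> \<tau> s t. neqt (Fun \<sigma> \<tau>) s t \<in> A \<longrightarrow>
          (\<exists>k. A \<union> {neqt \<tau> (nf (App s (N (V k \<sigma>)))) (nf (App t (N (V k \<sigma>))))} \<in> \<Gamma>)) \<and>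
       \<comment> \<open>Mat\<close>
       (\<forall>x ss ts. is_var x \<longrightarrow> length ss = length ts \<longrightarrow>
          apps (N x) ss \<in> A \<longrightarrow> neg (apps (N x) ts) \<in> A \<longrightarrow>
          1 \<le> length ss \<and> (\<exists>i<length ss. \<exists>\<sigma>. A \<union> {neqt \<sigma> (ss ! i) (ts ! i)} \<in> \<Gamma>)) \<and>
       \<comment> \<open>Dec\<close>
       (\<forall>k x ss ts. is_var x \<longrightarrow> length ss = length ts \<longrightarrow>
          neqt (Sort k) (apps (N x) ss) (apps (N x) ts) \<in> A \<longrightarrow>
          1 \<le> length ss \<and> (\<exists>i<length ss. \<exists>\<sigma>. A \<union> {neqt \<sigma> (ss ! i) (ts ! i)} \<in> \<Gamma>)) \<and>
       \<comment> \<open>Con\<close>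
       (\<forall>k s t u v. eqt (Sort k) s t \<in> A \<longrightarrow> neqt (Sort k) u v \<in> A \<longrightarrow>
          A \<union> {neqt (Sort k) s u, neqt (Sort k) t u} \<in> \<Gamma> \<or>
          A \<union> {neqt (Sort k) s v, neqt (Sort k) t v} \<in> \<Gamma>))"

definition complete_acc :: "(tm \<Rightarrow> tm) \<Rightarrow> tm set set \<Rightarrow> bool" where
  "complete_acc nf \<Gamma> \<longleftrightarrow>
     (\<forall>A\<in>\<Gamma>. \<forall>s. formula s \<and> normal nf s \<longrightarrow> A \<union> {s} \<in> \<Gamma> \<or> A \<union> {neg s} \<in> \<Gamma>)"

end

theory Submission
  imports Defs "HOL-Library.Countable"
begin

text \<open>The branch is built as the union of a chain in \<open>\<Gamma>\<close>: the requests (one per instance of an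
  evidence condition, plus one per formula for completeness) are enumerated so that every request
  recurs infinitely often, and at each stage the scheduled request is served by adding one of its
  alternatives whenever this stays inside \<open>\<Gamma>\<close>. A request whose finitely many triggering formulas
  lie in the union is triggered at all late stages, hence served at its next turn.\<close>

definition saturated :: "'a set set \<Rightarrow> ('r \<Rightarrow> 'a set set) \<Rightarrow> 'a set \<Rightarrow> bool" where
  "saturated \<Gamma> alts E \<longleftrightarrow>
     (\<forall>r F. finite F \<longrightarrow> F \<subseteq> E \<longrightarrow> (\<forall>B\<in>\<Gamma>. F \<subseteq> B \<longrightarrow> (\<exists>X\<in>alts r. B \<union> X \<in> \<Gamma>)) \<longrightarrow>
        (\<exists>X\<in>alts r. X \<subseteq> E))"

lemma saturatedD:
  assumes "saturated \<Gamma> alts E" and "finite F" and "F \<subseteq> E"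
    and "\<And>B. B \<in> \<Gamma> \<Longrightarrow> F \<subseteq> B \<Longrightarrow> \<exists>X\<in>alts r. B \<union> X \<in> \<Gamma>"
  shows "\<exists>X\<in>alts r. X \<subseteq> E"
  using saturated_def[THEN iffD1, rule_format, OF assms(1-3)] assms(4) by blast

definition serve :: "'a set set \<Rightarrow> 'a set set \<Rightarrow> 'a set \<Rightarrow> 'a set" where
  "serve \<Gamma> Xs B = (if \<exists>X\<in>Xs. B \<union> X \<in> \<Gamma> then B \<union> (SOME X. X \<in> Xs \<and> B \<union> X \<in> \<Gamma>) else B)"

definition scheduled :: "nat \<Rightarrow> 'r::countable" where
  "scheduled n = from_nat (fst (prod_decode n))"

lemma scheduled_prod_encode: "scheduled (prod_encode (to_nat r, m)) = r"
  by (simp add: scheduled_def)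

primrec fair_chain :: "'a set set \<Rightarrow> ('r::countable \<Rightarrow> 'a set set) \<Rightarrow> 'a set \<Rightarrow> nat \<Rightarrow> 'a set" where
  "fair_chain \<Gamma> alts A 0 = A"
| "fair_chain \<Gamma> alts A (Suc n) = serve \<Gamma> (alts (scheduled n)) (fair_chain \<Gamma> alts A n)"

lemma serve_in: "B \<in> \<Gamma> \<Longrightarrow> serve \<Gamma> Xs B \<in> \<Gamma>"
  using someI_ex[of "\<lambda>X. X \<in> Xs \<and> B \<union> X \<in> \<Gamma>"] unfolding serve_def by auto

lemma serve_serves:
  assumes "\<exists>X\<in>Xs. B \<union> X \<in> \<Gamma>"
  shows "\<exists>X\<in>Xs. serve \<Gamma> Xs B = B \<union> X"
  using assms someI_ex[of "\<lambda>X. X \<in> Xs \<and> B \<union> X \<in> \<Gamma>"] unfolding serve_def by auto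

lemma fair_chain_in: "A \<in> \<Gamma> \<Longrightarrow> fair_chain \<Gamma> alts A n \<in> \<Gamma>"
  by (induction n) (simp_all add: serve_in)

lemma fair_chain_mono: "m \<le> n \<Longrightarrow> fair_chain \<Gamma> alts A m \<subseteq> fair_chain \<Gamma> alts A n"
proof (induction n rule: dec_induct)
  case (step n)
  then show ?case by (auto simp: serve_def)
qed simp

lemma finite_subset_fair_chain:
  assumes "finite F" and "F \<subseteq> (\<Union>n. fair_chain \<Gamma> alts A n)"
  shows "\<exists>m. \<forall>n\<ge>m. F \<subseteq> fair_chain \<Gamma> alts A n"
  using assms
proof (induction F rule: finite_induct)
  case (insert x F)
  then obtain m where m: "\<forall>n\<ge>m. F \<subseteq> fair_chain \<Gamma> alts A n" by blast
  obtain k where "x \<in> fair_chain \<Gamma> alts A k" using insert.prems by blast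
  then have "insert x F \<subseteq> fair_chain \<Gamma> alts A n" if "max m k \<le> n" for n
    using that m fair_chain_mono[of k n \<Gamma> alts A] by auto
  then show ?case by (intro exI[of _ "max m k"]) simp
qed simp

lemma saturated_extension:
  fixes alts :: "'r::countable \<Rightarrow> 'a set set"
  assumes "A \<in> \<Gamma>"
  shows "\<exists>E. A \<subseteq> E \<and> E \<subseteq> \<Union>\<Gamma> \<and> saturated \<Gamma> alts E"
proof (intro exI conjI)
  let ?C = "fair_chain \<Gamma> alts A"
  show "A \<subseteq> (\<Union>n. ?C n)"
    using UN_upper[of 0 UNIV ?C] by simp
  show "(\<Union>n. ?C n) \<subseteq> \<Union>\<Gamma>"
    by (intro UN_least Union_upper fair_chain_in[OF assms])
  show "saturated \<Gamma> alts (\<Union>n. ?C n)"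
    unfolding saturated_def
  proof (intro allI impI)
    fix r F
    assume F: "finite F" "F \<subseteq> (\<Union>n. ?C n)"
      and served: "\<forall>B\<in>\<Gamma>. F \<subseteq> B \<longrightarrow> (\<exists>X\<in>alts r. B \<union> X \<in> \<Gamma>)"
    obtain m where m: "\<forall>n\<ge>m. F \<subseteq> ?C n"
      using finite_subset_fair_chain[OF F] by blast
    define n where "n = prod_encode (to_nat r, m)"
    have "m \<le> n"
      unfolding n_def by (rule le_prod_encode_2)
    then have "\<exists>X\<in>alts r. ?C n \<union> X \<in> \<Gamma>"
      using served m fair_chain_in[OF assms, of alts n] by simp
    then obtain X where X: "X \<in> alts r" and "serve \<Gamma> (alts r) (?C n) = ?C n \<union> X"
      using serve_serves by metis
    then have "X \<subseteq> ?C (Suc n)"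
      by (simp add: n_def scheduled_prod_encode)
    with X show "\<exists>X\<in>alts r. X \<subseteq> (\<Union>n. ?C n)"
      by (meson UN_upper UNIV_I subset_trans)
  qed
qed

instance ty :: countable by countable_datatype
instance name :: countable by countable_datatype
instance tm :: countable by countable_datatype

datatype request =
    Req_DN tm | Req_BQ tm tm | Req_BE tm tm | Req_FQ ty tm tm tm | Req_FE ty ty tm tm
  | Req_Args "tm list" "tm list" | Req_Con nat tm tm tm tm | Req_Decide tm

instance request :: countable by countable_datatype

text \<open>\<open>Req_Args\<close> serves both Mat and Dec, whose conclusions coincide.\<close>

fun alternatives :: "(tm \<Rightarrow> tm) \<Rightarrow> request \<Rightarrow> tm set set" where
  "alternatives nf (Req_DN s) = {{s}}"
| "alternatives nf (Req_BQ s t) = {{s, t}, {neg s, neg t}}"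
| "alternatives nf (Req_BE s t) = {{s, neg t}, {neg s, t}}"
| "alternatives nf (Req_FQ \<tau> s t u) = {{eqt \<tau> (nf (App s u)) (nf (App t u))}}"
| "alternatives nf (Req_FE \<sigma> \<tau> s t) =
     {{neqt \<tau> (nf (App s (N (V k \<sigma>)))) (nf (App t (N (V k \<sigma>))))} | k. True}"
| "alternatives nf (Req_Args ss ts) = {{neqt \<sigma> (ss ! i) (ts ! i)} | i \<sigma>. i < length ss}"
| "alternatives nf (Req_Con k s t u v) =
     {{neqt (Sort k) s u, neqt (Sort k) t u}, {neqt (Sort k) s v, neqt (Sort k) t v}}"
| "alternatives nf (Req_Decide s) = {{s}, {neg s}}"

lemma acc_serves_requests:
  assumes "acc nf \<Gamma>" and "B \<in> \<Gamma>"
  shows "neg (neg s) \<in> B \<Longrightarrow> \<exists>X\<in>alternatives nf (Req_DN s). B \<union> X \<in> \<Gamma>"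
    and "eqt To s t \<in> B \<Longrightarrow> \<exists>X\<in>alternatives nf (Req_BQ s t). B \<union> X \<in> \<Gamma>"
    and "neqt To s t \<in> B \<Longrightarrow> \<exists>X\<in>alternatives nf (Req_BE s t). B \<union> X \<in> \<Gamma>"
    and "eqt (Fun \<sigma> \<tau>) s t \<in> B \<Longrightarrow> tyof u = Some \<sigma> \<Longrightarrow> normal nf u \<Longrightarrow>
           \<exists>X\<in>alternatives nf (Req_FQ \<tau> s t u). B \<union> X \<in> \<Gamma>"
    and "neqt (Fun \<sigma> \<tau>) s t \<in> B \<Longrightarrow> \<exists>X\<in>alternatives nf (Req_FE \<sigma> \<tau> s t). B \<union> X \<in> \<Gamma>"
    and "is_var x \<Longrightarrow> length ss = length ts \<Longrightarrow> apps (N x) ss \<in> B \<Longrightarrow> neg (apps (N x) ts) \<in> B \<Longrightarrow>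
           \<exists>X\<in>alternatives nf (Req_Args ss ts). B \<union> X \<in> \<Gamma>"
    and "is_var x \<Longrightarrow> length ss = length ts \<Longrightarrow> neqt (Sort k) (apps (N x) ss) (apps (N x) ts) \<in> B \<Longrightarrow>
           \<exists>X\<in>alternatives nf (Req_Args ss ts). B \<union> X \<in> \<Gamma>"
    and "eqt (Sort k) s t \<in> B \<Longrightarrow> neqt (Sort k) u v \<in> B \<Longrightarrow>
           \<exists>X\<in>alternatives nf (Req_Con k s t u v). B \<union> X \<in> \<Gamma>"
proof -
  note closure = bspec[OF assms(1)[unfolded acc_def, THEN conjunct2] assms(2)]
  show "neg (neg s) \<in> B \<Longrightarrow> \<exists>X\<in>alternatives nf (Req_DN s). B \<union> X \<in> \<Gamma>"
    and "eqt To s t \<in> B \<Longrightarrow> \<exists>X\<in>alternatives nf (Req_BQ s t). B \<union> X \<in> \<Gamma>"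
    and "neqt To s t \<in> B \<Longrightarrow> \<exists>X\<in>alternatives nf (Req_BE s t). B \<union> X \<in> \<Gamma>"
    and "eqt (Fun \<sigma> \<tau>) s t \<in> B \<Longrightarrow> tyof u = Some \<sigma> \<Longrightarrow> normal nf u \<Longrightarrow>
           \<exists>X\<in>alternatives nf (Req_FQ \<tau> s t u). B \<union> X \<in> \<Gamma>"
    and "eqt (Sort k) s t \<in> B \<Longrightarrow> neqt (Sort k) u v \<in> B \<Longrightarrow>
           \<exists>X\<in>alternatives nf (Req_Con k s t u v). B \<union> X \<in> \<Gamma>"
    using closure by (elim conjE; simp)+
  show "\<exists>X\<in>alternatives nf (Req_FE \<sigma> \<tau> s t). B \<union> X \<in> \<Gamma>" if "neqt (Fun \<sigma> \<tau>) s t \<in> B"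
  proof -
    from closure that obtain k
      where "B \<union> {neqt \<tau> (nf (App s (N (V k \<sigma>)))) (nf (App t (N (V k \<sigma>))))} \<in> \<Gamma>"
      by (elim conjE) metis
    then show ?thesis
      by (intro bexI[of _ "{neqt \<tau> (nf (App s (N (V k \<sigma>)))) (nf (App t (N (V k \<sigma>))))}"]) auto
  qed
  have args_served: "\<exists>X\<in>alternatives nf (Req_Args ss ts). B \<union> X \<in> \<Gamma>"
    if "\<exists>i<length ss. \<exists>\<sigma>. B \<union> {neqt \<sigma> (ss ! i) (ts ! i)} \<in> \<Gamma>" for ss ts
  proof -
    from that obtain i \<sigma> where "i < length ss" "B \<union> {neqt \<sigma> (ss ! i) (ts ! i)} \<in> \<Gamma>"
      by blast
    then show ?thesis
      by (intro bexI[of _ "{neqt \<sigma> (ss ! i) (ts ! i)}"]) auto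
  qed
  show "\<exists>X\<in>alternatives nf (Req_Args ss ts). B \<union> X \<in> \<Gamma>"
    if "is_var x" "length ss = length ts" "apps (N x) ss \<in> B" "neg (apps (N x) ts) \<in> B"
    using closure that by (elim conjE) (rule args_served, metis)
  show "\<exists>X\<in>alternatives nf (Req_Args ss ts). B \<union> X \<in> \<Gamma>"
    if "is_var x" "length ss = length ts" "neqt (Sort k) (apps (N x) ss) (apps (N x) ts) \<in> B"
    using closure that by (elim conjE) (rule args_served, metis)
qed

lemma saturated_imp_evident:
  assumes acc: "acc nf \<Gamma>" and "E \<subseteq> \<Union>\<Gamma>" and sat: "saturated \<Gamma> (alternatives nf) E"
  shows "evident nf E"
  unfolding evident_def
proof (intro conjI allI impI)
  show "branch nf E"
    using acc[unfolded acc_def, THEN conjunct1] \<open>E \<subseteq> \<Union>\<Gamma>\<close>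
    unfolding branch_def by blast
next
  fix s assume "neg (neg s) \<in> E"
  then have "\<exists>X\<in>alternatives nf (Req_DN s). X \<subseteq> E"
    by (intro saturatedD[OF sat, of "{neg (neg s)}"] acc_serves_requests(1)[OF acc]) auto
  then show "s \<in> E" by simp
next
  fix s t assume "eqt To s t \<in> E"
  then have "\<exists>X\<in>alternatives nf (Req_BQ s t). X \<subseteq> E"
    by (intro saturatedD[OF sat, of "{eqt To s t}"] acc_serves_requests(2)[OF acc]) auto
  then show "s \<in> E \<and> t \<in> E \<or> neg s \<in> E \<and> neg t \<in> E" by simp
next
  fix s t assume "neqt To s t \<in> E"
  then have "\<exists>X\<in>alternatives nf (Req_BE s t). X \<subseteq> E"
    by (intro saturatedD[OF sat, of "{neqt To s t}"] acc_serves_requests(3)[OF acc]) auto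
  then show "s \<in> E \<and> neg t \<in> E \<or> neg s \<in> E \<and> t \<in> E" by simp
next
  fix \<sigma> \<tau> s t u assume "eqt (Fun \<sigma> \<tau>) s t \<in> E" "tyof u = Some \<sigma> \<and> normal nf u"
  then have "\<exists>X\<in>alternatives nf (Req_FQ \<tau> s t u). X \<subseteq> E"
    by (intro saturatedD[OF sat, of "{eqt (Fun \<sigma> \<tau>) s t}"]
        acc_serves_requests(4)[OF acc]) auto
  then show "eqt \<tau> (nf (App s u)) (nf (App t u)) \<in> E" by simp
next
  fix \<sigma> \<tau> s t assume "neqt (Fun \<sigma> \<tau>) s t \<in> E"
  then have "\<exists>X\<in>alternatives nf (Req_FE \<sigma> \<tau> s t). X \<subseteq> E"
    by (intro saturatedD[OF sat, of "{neqt (Fun \<sigma> \<tau>) s t}"]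
        acc_serves_requests(5)[OF acc]) auto
  then show "\<exists>k. neqt \<tau> (nf (App s (N (V k \<sigma>)))) (nf (App t (N (V k \<sigma>)))) \<in> E" by auto
next
  fix x ss ts
  assume "is_var x" "length ss = length ts" "apps (N x) ss \<in> E" "neg (apps (N x) ts) \<in> E"
  then have "\<exists>X\<in>alternatives nf (Req_Args ss ts). X \<subseteq> E"
    by (intro saturatedD[OF sat, of "{apps (N x) ss, neg (apps (N x) ts)}"]
        acc_serves_requests(6)[OF acc]) auto
  then show "1 \<le> length ss" "\<exists>i<length ss. \<exists>\<sigma>. neqt \<sigma> (ss ! i) (ts ! i) \<in> E" by auto
next
  fix k x ss ts
  assume "is_var x" "length ss = length ts" "neqt (Sort k) (apps (N x) ss) (apps (N x) ts) \<in> E"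
  then have "\<exists>X\<in>alternatives nf (Req_Args ss ts). X \<subseteq> E"
    by (intro saturatedD[OF sat, of "{neqt (Sort k) (apps (N x) ss) (apps (N x) ts)}"]
        acc_serves_requests(7)[OF acc]) auto
  then show "1 \<le> length ss" "\<exists>i<length ss. \<exists>\<sigma>. neqt \<sigma> (ss ! i) (ts ! i) \<in> E" by auto
next
  fix k s t u v assume "eqt (Sort k) s t \<in> E" "neqt (Sort k) u v \<in> E"
  then have "\<exists>X\<in>alternatives nf (Req_Con k s t u v). X \<subseteq> E"
    by (intro saturatedD[OF sat, of "{eqt (Sort k) s t, neqt (Sort k) u v}"]
        acc_serves_requests(8)[OF acc]) auto
  then show "neqt (Sort k) s u \<in> E \<and> neqt (Sort k) t u \<in> E \<or>
      neqt (Sort k) s v \<in> E \<and> neqt (Sort k) t v \<in> E" by simp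
qed

lemma saturated_imp_complete_branch:
  assumes "complete_acc nf \<Gamma>" and sat: "saturated \<Gamma> (alternatives nf) E"
  shows "complete_branch nf E"
  unfolding complete_branch_def
proof (intro allI impI)
  fix s assume "formula s \<and> normal nf s"
  then have "\<exists>X\<in>alternatives nf (Req_Decide s). B \<union> X \<in> \<Gamma>" if "B \<in> \<Gamma>" for B
    using assms(1) that unfolding complete_acc_def by simp
  then have "\<exists>X\<in>alternatives nf (Req_Decide s). X \<subseteq> E"
    by (intro saturatedD[OF sat, of "{}"]) auto
  then show "s \<in> E \<or> neg s \<in> E"
    by simp
qed

theorem lemma8p2:
  fixes nf :: "tm \<Rightarrow> tm" and \<Gamma> :: "tm set set" and A :: "tm set"
  assumes "normop nf" and "acc nf \<Gamma>" and "A \<in> \<Gamma>"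
  shows "(\<exists>E. evident nf E \<and> A \<subseteq> E) \<and>
         (complete_acc nf \<Gamma> \<longrightarrow> (\<exists>E. evident nf E \<and> complete_branch nf E \<and> A \<subseteq> E))"
proof -
  obtain E where "A \<subseteq> E" "E \<subseteq> \<Union>\<Gamma>" and sat: "saturated \<Gamma> (alternatives nf) E"
    using saturated_extension[OF assms(3)] by blast
  moreover have "evident nf E"
    using saturated_imp_evident[OF assms(2) \<open>E \<subseteq> \<Union>\<Gamma>\<close> sat] .
  moreover have "complete_acc nf \<Gamma> \<longrightarrow> complete_branch nf E"
    using saturated_imp_complete_branch[OF _ sat] by blast
  ultimately show ?thesis
    by blast
qed

end
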